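(* Let $-1\le t\le s\le n$ and $-1\le k\le n-s-1$ be integers. Let $X$ be an $n$-dimensional projective space over a field and let $K$ be a $k$-dimensional subspace of $X$. For each integer $d$ with $-1\le d\le \min\{k,t\}$, let $\mathcal B_d$ be an $(s-d-1,t-d-1)$-blocking set in the quotient space $X/K$. Then the (disjoint) union $$\mathcal B:=\bigcup_{d=-1}^{\min\{k,t\}}\{T\in \mathrm{Gr}_t(X):\ \dim(K\cap T)=d,\ \langle K,T\rangle\in\mathcal B_d\}$$ is an $(s,t)$-blocking set in $X$.
   Context: Projective dimension is used throughout; the empty subspace has dimension $-1$. For a projective space $Y$ and an integer $d$, $\mathrm{Gr}_d(Y)$ is the set of $d$-dimensional subspaces of $Y$. For $K\in\mathrm{Gr}_k(X)$, the quotient space $X/K$ is the projective space of dimension $\dim X-k-1$ whose $r$-dimensional subspaces ($-1\le r\le \dim X-k-1$) are the $(r+k+1)$-dimensional subspaces of $X$ containing $K$, ordered by inclusion (its unique $(-1)$-dimensional subspace is $K$ itself). $\langle K,T\rangle$ denotes the span of $K$ and $T$, regarded as a subspace of $X/K$. For integers $-1\le t\le s\le \dim Y$, an $(s,t)$-blocking set in a projective space $Y$ is a set $\mathcal B\subseteq\mathrm{Gr}_t(Y)$ such that every $s$-dimensional subspace of $Y$ contains at least one element of $\mathcal B$. *)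

theory Defs
  imports "HOL-Analysis.Analysis"
begin

text \<open>The n-dimensional projective space X = PG(V) over a field 'a is modelled by the
vector space V = 'a^'n with CARD('n) = n + 1. Subspaces of X are linear subspaces of V;
the projective dimension of U is (vector dimension of U) - 1, so the zero subspace has
projective dimension -1.\<close>

definition pdim :: "('a::field ^ 'n) set \<Rightarrow> int" where
  "pdim U = int (vec.dim U) - 1"

definition Gr :: "int \<Rightarrow> ('a::field ^ 'n) set set" where
  "Gr d = {U. vec.subspace U \<and> pdim U = d}"

text \<open>Gr_r(X/K): the r-dimensional subspaces of the quotient X/K, i.e. the
(r + k + 1)-dimensional subspaces of X containing K, where k = pdim K.\<close>
definition Gr_quot :: "('a::field ^ 'n) set \<Rightarrow> int \<Rightarrow> ('a ^ 'n) set set" where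
  "Gr_quot K r = {U. vec.subspace U \<and> K \<subseteq> U \<and> pdim U = r + pdim K + 1}"

definition pjoin :: "('a::field ^ 'n) set \<Rightarrow> ('a ^ 'n) set \<Rightarrow> ('a ^ 'n) set" where
  "pjoin K T = vec.span (K \<union> T)"

definition blocking_set :: "int \<Rightarrow> int \<Rightarrow> ('a::field ^ 'n) set set \<Rightarrow> bool" where
  "blocking_set s t B \<longleftrightarrow> B \<subseteq> Gr t \<and> (\<forall>S \<in> Gr s. \<exists>T \<in> B. T \<subseteq> S)"

text \<open>(s,t)-blocking set in the quotient space X/K (inclusion order of X/K is inclusion in X).\<close>
definition blocking_set_quot ::
    "('a::field ^ 'n) set \<Rightarrow> int \<Rightarrow> int \<Rightarrow> ('a ^ 'n) set set \<Rightarrow> bool" where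
  "blocking_set_quot K s t B \<longleftrightarrow> B \<subseteq> Gr_quot K t \<and> (\<forall>S \<in> Gr_quot K s. \<exists>T \<in> B. T \<subseteq> S)"

end

theory Submission imports Defs begin

text \<open>Let S be an s-space and put d = dim (K \<inter> S). If d \<le> t, the join \<langle>K,S\<rangle> is an
(s-d-1)-space of X/K, so it contains some U \<in> B_d; by the modular law
U = \<langle>K, U \<inter> S\<rangle>, and T = U \<inter> S is a t-space in S with K \<inter> T = K \<inter> S. If d > t, then
B_t is a (s-t-1,-1)-blocking set of X/K; as k \<le> n-s-1, X/K has (s-t-1)-spaces, which
forces K \<in> B_t, and any t-space T inside K \<inter> S has \<langle>K,T\<rangle> = K.\<close>

context vector_space
begin

lemma span_Un_Int_eq:
  assumes "subspace K" "subspace U" "subspace S" "K \<subseteq> U" "U \<subseteq> span (K \<union> S)"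
  shows "span (K \<union> (U \<inter> S)) = U"
proof
  show "span (K \<union> (U \<inter> S)) \<subseteq> U"
    using assms by (intro span_minimal) auto
  show "U \<subseteq> span (K \<union> (U \<inter> S))"
  proof
    fix u assume "u \<in> U"
    then obtain x y where u: "u = x + y" and "x \<in> K" "y \<in> S"
      using assms by (auto simp: span_Un span_eq_iff[THEN iffD2])
    then have "y \<in> U \<inter> S"
      using \<open>u \<in> U\<close> assms by (metis IntI add_diff_cancel_left' subsetD subspace_diff)
    then show "u \<in> span (K \<union> (U \<inter> S))"
      using u \<open>x \<in> K\<close> by (metis UnCI span_add span_base)
  qed
qed

end

context finite_dimensional_vector_space
begin

lemma dim_span_Un_Int:
  assumes "subspace U" "subspace W"
  shows "dim (span (U \<union> W)) + dim (U \<inter> W) = dim U + dim W"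
proof -
  have "span (U \<union> W) = {x + y |x y. x \<in> U \<and> y \<in> W}"
    using assms by (simp add: span_Un span_eq_iff[THEN iffD2])
  then show ?thesis
    using dim_sums_Int[OF assms] by simp
qed

lemma choose_subspace_between:
  assumes "subspace A" "subspace B" "A \<subseteq> B" "dim A \<le> m" "m \<le> dim B"
  obtains C where "subspace C" "A \<subseteq> C" "C \<subseteq> B" "dim C = m"
proof -
  have "\<exists>C. subspace C \<and> A \<subseteq> C \<and> C \<subseteq> B \<and> dim C = dim A + j" if "dim A + j \<le> dim B" for j
    using that
  proof (induction j)
    case 0
    then show ?case using assms by auto
  next
    case (Suc j)
    then obtain C where C: "subspace C" "A \<subseteq> C" "C \<subseteq> B" "dim C = dim A + j"
      by force
    have "\<not> B \<subseteq> C"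
      using dim_subset[of B C] Suc.prems C by linarith
    then obtain y where y: "y \<in> B" "y \<notin> span C"
      using C by (auto simp: span_eq_iff[THEN iffD2])
    have "span (insert y C) \<subseteq> B"
      using y C assms(2) by (intro span_minimal) auto
    moreover have "dim (span (insert y C)) = dim C + 1"
      using y by (simp add: dim_insert)
    ultimately show ?case
      using C by (intro exI[of _ "span (insert y C)"]) (auto intro: span_base)
  qed
  then show ?thesis
    using assms that by (metis le_add_diff_inverse)
qed

end

lemma mem_Gr_iff: "U \<in> Gr d \<longleftrightarrow> vec.subspace U \<and> int (vec.dim U) = d + 1"
  by (auto simp: Gr_def pdim_def)

lemma mem_Gr_quot_iff:
  "U \<in> Gr_quot K r \<longleftrightarrow> vec.subspace U \<and> K \<subseteq> U \<and> int (vec.dim U) = r + int (vec.dim K) + 1"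
  by (auto simp: Gr_quot_def pdim_def)

lemma Gr_quot_minus_one:
  assumes "vec.subspace K"
  shows "Gr_quot K (-1) = {K}"
proof (intro set_eqI iffI)
  fix U assume "U \<in> Gr_quot K (-1)"
  then have "U = K"
    using vec.subspace_dim_equal[OF assms, of U] by (simp add: mem_Gr_quot_iff)
  then show "U \<in> {K}" by simp
qed (use assms in \<open>simp add: mem_Gr_quot_iff\<close>)

lemma Gr_quot_nonempty:
  fixes K :: "('a::field ^ 'n) set"
  assumes "vec.subspace K" "-1 \<le> r" "r + int (vec.dim K) < int CARD('n)"
  shows "Gr_quot K r \<noteq> {}"
proof -
  obtain C :: "('a ^ 'n) set" where "vec.subspace C" "K \<subseteq> C" "vec.dim C = nat (r + 1) + vec.dim K"
    using vec.choose_subspace_between[OF assms(1) vec.subspace_UNIV, of "nat (r + 1) + vec.dim K"]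
      assms vec_dim_card[where 'a='a and 'n='n] by force
  then have "C \<in> Gr_quot K r"
    using assms(2) by (simp add: mem_Gr_quot_iff)
  then show ?thesis by blast
qed

lemma self_mem_blocking_set_quot:
  assumes "blocking_set_quot K s (-1) B" "vec.subspace K" "Gr_quot K s \<noteq> {}"
  shows "K \<in> B"
  using assms by (auto simp: blocking_set_quot_def Gr_quot_minus_one)

lemma pjoin_eq_left:
  assumes "vec.subspace K" "T \<subseteq> K"
  shows "pjoin K T = K"
  using assms by (simp add: pjoin_def Un_absorb2 vec.span_eq_iff[THEN iffD2])

lemma blocked_via_join:
  assumes K: "vec.subspace K" and S: "S \<in> Gr s"
    and B: "blocking_set_quot K (s - d - 1) (t - d - 1) B"
    and d: "pdim (K \<inter> S) = d"
  shows "\<exists>T \<in> Gr t. T \<subseteq> S \<and> pdim (K \<inter> T) = d \<and> pjoin K T \<in> B"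
proof -
  have Ss: "vec.subspace S" and Sd: "int (vec.dim S) = s + 1"
    using S by (auto simp: mem_Gr_iff)
  have Dd: "int (vec.dim (K \<inter> S)) = d + 1"
    using d by (simp add: pdim_def)
  define J where "J = vec.span (K \<union> S)"
  have "vec.dim J + vec.dim (K \<inter> S) = vec.dim K + vec.dim S"
    unfolding J_def by (rule vec.dim_span_Un_Int[OF K Ss])
  moreover have "K \<subseteq> J"
    unfolding J_def by (auto intro: vec.span_base)
  ultimately have "J \<in> Gr_quot K (s - d - 1)"
    using Sd Dd by (simp add: mem_Gr_quot_iff J_def)
  then obtain U where "U \<in> B" "U \<subseteq> J"
    using B by (auto simp: blocking_set_quot_def)
  then have "U \<in> Gr_quot K (t - d - 1)"
    using B by (auto simp: blocking_set_quot_def)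
  then have Us: "vec.subspace U" and KU: "K \<subseteq> U"
    and Ud: "int (vec.dim U) = t - d + int (vec.dim K)"
    by (auto simp: mem_Gr_quot_iff)
  define T where "T = U \<inter> S"
  have join: "vec.span (K \<union> T) = U"
    unfolding T_def using K Us Ss KU \<open>U \<subseteq> J\<close> J_def by (intro vec.span_Un_Int_eq) auto
  have meet: "K \<inter> T = K \<inter> S"
    unfolding T_def using KU by auto
  have Ts: "vec.subspace T"
    unfolding T_def using Us Ss by (rule vec.subspace_inter)
  have "vec.dim U + vec.dim (K \<inter> S) = vec.dim K + vec.dim T"
    using vec.dim_span_Un_Int[OF K Ts] join meet by simp
  then have "T \<in> Gr t"
    using Ts Ud Dd by (simp add: mem_Gr_iff)
  moreover have "T \<subseteq> S" "pdim (K \<inter> T) = d"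
    using meet d by (auto simp: T_def)
  ultimately show ?thesis
    using join \<open>U \<in> B\<close> by (auto simp: pjoin_def)
qed

lemma blocked_inside_meet:
  fixes K :: "('a::field ^ 'n) set"
  assumes K: "vec.subspace K" and S: "S \<in> Gr s"
    and B: "blocking_set_quot K (s - t - 1) (-1) B"
    and t: "-1 \<le> t" "t \<le> s" and meet: "t < pdim (K \<inter> S)"
    and room: "s - t + int (vec.dim K) \<le> int CARD('n)"
  shows "\<exists>T \<in> Gr t. T \<subseteq> S \<and> pdim (K \<inter> T) = t \<and> pjoin K T \<in> B"
proof -
  have "K \<in> B"
    using B K Gr_quot_nonempty[OF K, of "s - t - 1"] t room
    by (intro self_mem_blocking_set_quot) auto
  have "nat (t + 1) \<le> vec.dim (K \<inter> S)"
    using t meet by (simp add: pdim_def)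
  then obtain T where T: "vec.subspace T" "T \<subseteq> K \<inter> S" "vec.dim T = nat (t + 1)"
    using vec.choose_subspace_of_subspace[of "nat (t + 1)" "K \<inter> S"] K S
    by (metis mem_Gr_iff vec.span_eq_iff vec.subspace_inter)
  then have "T \<in> Gr t" "T \<subseteq> S" "pdim (K \<inter> T) = t" "pjoin K T = K"
    using t K by (auto simp: mem_Gr_iff pdim_def Int_absorb1 pjoin_eq_left)
  then show ?thesis
    using \<open>K \<in> B\<close> by auto
qed

theorem theorem3p8:
  fixes n s t k :: int
    and K :: "('a::field ^ 'n) set"
    and Bd :: "int \<Rightarrow> ('a ^ 'n) set set"
  assumes "int CARD('n) = n + 1"
    and "-1 \<le> t" and "t \<le> s" and "s \<le> n"
    and "-1 \<le> k" and "k \<le> n - s - 1"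
    and "K \<in> Gr k"
    and "\<And>d. -1 \<le> d \<Longrightarrow> d \<le> min k t \<Longrightarrow> blocking_set_quot K (s - d - 1) (t - d - 1) (Bd d)"
  shows "blocking_set s t
           (\<Union>d \<in> {-1..min k t}. {T \<in> Gr t. pdim (K \<inter> T) = d \<and> pjoin K T \<in> Bd d})"
  unfolding blocking_set_def
proof (intro conjI ballI)
  show "(\<Union>d \<in> {-1..min k t}. {T \<in> Gr t. pdim (K \<inter> T) = d \<and> pjoin K T \<in> Bd d}) \<subseteq> Gr t"
    by blast
next
  fix S :: "('a ^ 'n) set"
  assume S: "S \<in> Gr s"
  have K: "vec.subspace K" "int (vec.dim K) = k + 1"
    using assms(7) by (auto simp: mem_Gr_iff)
  define d where "d = min (pdim (K \<inter> S)) t"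
  have "d \<in> {-1..min k t}"
    using vec.dim_subset[of "K \<inter> S" K] K assms(2) by (auto simp: d_def pdim_def)
  then have Bd: "blocking_set_quot K (s - d - 1) (t - d - 1) (Bd d)"
    using assms(8) by simp
  have "\<exists>T \<in> Gr t. T \<subseteq> S \<and> pdim (K \<inter> T) = d \<and> pjoin K T \<in> Bd d"
  proof (cases "pdim (K \<inter> S) \<le> t")
    case True
    then show ?thesis
      using blocked_via_join[OF K(1) S Bd] by (simp add: d_def)
  next
    case False
    then show ?thesis
      using blocked_inside_meet[OF K(1) S, of t] Bd assms(1-6) K(2) by (simp add: d_def)
  qed
  then show "\<exists>T \<in> (\<Union>d \<in> {-1..min k t}. {T \<in> Gr t. pdim (K \<inter> T) = d \<and> pjoin K T \<in> Bd d}). T \<subseteq> S"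
    using \<open>d \<in> {-1..min k t}\<close> by blast
qed

end
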